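(* For $h_1,h_2\in\mathbb{R}$ let $S_{h_1,h_2}:=\{(x,y)\in\mathbb{R}^2:x\le h_1,\ y\le h_2,\ x^2+y^2\le1\}$, $C_0(h_1,h_2):=\iint_{S_{h_1,h_2}}dx\,dy$ and $C_1(h_1,h_2):=\iint_{S_{h_1,h_2}}\sqrt{x^2+y^2}\,dx\,dy$. Then for each $i\in\{0,1\}$ and all $h_1,h_2\in\mathbb{R}$: \[C_i(h_1,h_2)=\begin{cases}0,& h_1^2+h_2^2>1,\ h_1\le0,\ h_2\le0,\\ B_i(h_2),& h_1^2+h_2^2>1,\ h_1>0,\ h_2\le0,\\ B_i(h_1),& h_1^2+h_2^2>1,\ h_1\le0,\ h_2>0,\\ B_i(h_1)+B_i(h_2)-\frac{3-i}{3}\pi,& h_1^2+h_2^2>1,\ h_1>0,\ h_2>0,\\ \frac{3-i}{6}\left(\frac\pi2+\arcsin h_1+\arcsin h_2\right)+A_i\left(h_1,\sqrt{1-h_1^2}\right)\\ \quad+A_i\left(h_2,\sqrt{1-h_2^2}\right)+A_i(h_1,h_2)+A_i(h_2,h_1),& h_1^2+h_2^2\le1.\end{cases}\]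
   Context: Define $A_0,A_1:\mathbb{R}^2\to\mathbb{R}$ by $A_0(a,b):=\int_0^a\int_0^{bx/a}dy\,dx$ and $A_1(a,b):=\int_0^a\int_0^{bx/a}\sqrt{x^2+y^2}\,dy\,dx$ for $a\ne0$, and $A_0(0,b)=A_1(0,b):=0$ (integrals oriented/signed). For $h\in\mathbb{R}$ let $S_h:=\{(x,y):x\le h,\ x^2+y^2\le1\}$, $B_0(h):=\iint_{S_h}dx\,dy$, $B_1(h):=\iint_{S_h}\sqrt{x^2+y^2}\,dx\,dy$. *)

theory Defs
  imports "HOL-Analysis.Analysis"
begin

definition oint :: "real \<Rightarrow> real \<Rightarrow> (real \<Rightarrow> real) \<Rightarrow> real" where
  "oint a b f = (if a \<le> b then integral {a..b} f else - integral {b..a} f)"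

definition wt :: "nat \<Rightarrow> real \<Rightarrow> real \<Rightarrow> real" where
  "wt i x y = (if i = 0 then 1 else sqrt (x\<^sup>2 + y\<^sup>2))"

definition A :: "nat \<Rightarrow> real \<Rightarrow> real \<Rightarrow> real" where
  "A i a b = (if a = 0 then 0 else oint 0 a (\<lambda>x. oint 0 (b * x / a) (\<lambda>y. wt i x y)))"

definition S1 :: "real \<Rightarrow> (real \<times> real) set" where
  "S1 h = {(x, y). x \<le> h \<and> x\<^sup>2 + y\<^sup>2 \<le> 1}"

definition B :: "nat \<Rightarrow> real \<Rightarrow> real" where
  "B i h = integral (S1 h) (\<lambda>(x, y). wt i x y)"

definition S2 :: "real \<Rightarrow> real \<Rightarrow> (real \<times> real) set" where
  "S2 h1 h2 = {(x, y). x \<le> h1 \<and> y \<le> h2 \<and> x\<^sup>2 + y\<^sup>2 \<le> 1}"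

definition C :: "nat \<Rightarrow> real \<Rightarrow> real \<Rightarrow> real" where
  "C i h1 h2 = integral (S2 h1 h2) (\<lambda>(x, y). wt i x y)"

end

theory Submission
  imports Defs
begin

text \<open>
  By Fubini's theorem for continuous functions on compact sets, \<open>C\<close> is an iterated integral
  along the vertical chords of the disk, and since the weight is symmetric,
  \<open>C i h1 h2 = C i h2 h1\<close>. If \<open>h1\<^sup>2 + h2\<^sup>2 > 1\<close> the corner \<open>(h1, h2)\<close> lies outside the
  disk, so the two constraints interact trivially: the region is empty, one constraint is
  inactive, or (both \<open>h\<close> positive) the half-disks \<open>x \<le> h1\<close> and \<open>y \<le> h2\<close> cover the disk and
  meet in the region, which gives \<open>C = B + B - disk\<close> by inclusion-exclusion.
  Inside the disk, \<open>C i h1 h2\<close> is the lower half-disk cut at \<open>x = h1\<close> plus the strip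
  \<open>0 \<le> y \<le> h2\<close>. Both are computed by the fundamental theorem of calculus with explicit
  antiderivatives: the first is a circular sector plus a triangle, and the chord integral over
  the strip is the derivative of \<open>A i h1 y + A i y h1\<close>, the weighted area of the rectangle
  \<open>[0, h1] \<times> [0, y]\<close>.
\<close>

subsection \<open>Integration on compact subsets of the plane\<close>

lemma integrable_on_compact:
  fixes f :: "'a::euclidean_space \<Rightarrow> real"
  assumes "compact S" "continuous_on S f"
  shows "f integrable_on S"
  using integrable_on_lborel[OF borel_integrable_compact[OF assms]]
  by (simp add: indicator_times_eq_if integrable_restrict_UNIV)

lemma integral_compact_eq_lborel:
  fixes f :: "'a::euclidean_space \<Rightarrow> real"
  assumes "compact S" "continuous_on S f"
  shows "integral S f = (\<integral>z. indicator S z * f z \<partial>lborel)"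
  using integral_lborel[OF borel_integrable_compact[OF assms]]
  by (simp add: indicator_times_eq_if integral_restrict_UNIV)

lemma compact_slices:
  fixes S :: "('a::heine_borel \<times> 'b::heine_borel) set"
  assumes "compact S"
  shows "compact {y. (x, y) \<in> S}" and "compact {x. (x, y) \<in> S}"
proof -
  have "{y. (x, y) \<in> S} = Pair x -` S" "{x. (x, y) \<in> S} = (\<lambda>x. (x, y)) -` S" by auto
  then have "closed {y. (x, y) \<in> S}" "closed {x. (x, y) \<in> S}"
    using compact_imp_closed[OF assms] by (auto intro!: continuous_closed_vimage continuous_intros)
  moreover have "bounded {y. (x, y) \<in> S}"
    by (rule bounded_subset[OF compact_imp_bounded[OF compact_continuous_image[of S snd]]])
      (use assms in \<open>force intro!: continuous_intros\<close>)+
  moreover have "bounded {x. (x, y) \<in> S}"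
    by (rule bounded_subset[OF compact_imp_bounded[OF compact_continuous_image[of S fst]]])
      (use assms in \<open>force intro!: continuous_intros\<close>)+
  ultimately show "compact {y. (x, y) \<in> S}" "compact {x. (x, y) \<in> S}"
    by (simp_all add: compact_eq_bounded_closed)
qed

lemma integral_iterated_compact:
  fixes f :: "real \<times> real \<Rightarrow> real"
  assumes S: "compact S" and f: "continuous_on S f"
  shows "integral S f = integral UNIV (\<lambda>x. integral {y. (x, y) \<in> S} (\<lambda>y. f (x, y)))"
    and "integral S f = integral UNIV (\<lambda>y. integral {x. (x, y) \<in> S} (\<lambda>x. f (x, y)))"
    and "(\<lambda>x. integral {y. (x, y) \<in> S} (\<lambda>y. f (x, y))) integrable_on UNIV"
proof -
  define g where "g = (\<lambda>z. indicator S z * f z)"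
  have int: "integrable (lborel \<Otimes>\<^sub>M lborel) g"
    using borel_integrable_compact[OF assms] by (simp add: g_def lborel_prod)
  have "continuous_on {y. (x, y) \<in> S} (\<lambda>y. f (x, y))" for x
    by (rule continuous_on_compose2[OF f]) (auto intro!: continuous_intros)
  then have inner1: "integral {y. (x, y) \<in> S} (\<lambda>y. f (x, y)) = (\<integral>y. g (x, y) \<partial>lborel)" for x
    by (simp add: integral_compact_eq_lborel[OF compact_slices(1)[OF S]] g_def indicator_def)
  have "continuous_on {x. (x, y) \<in> S} (\<lambda>x. f (x, y))" for y
    by (rule continuous_on_compose2[OF f]) (auto intro!: continuous_intros)
  then have inner2: "integral {x. (x, y) \<in> S} (\<lambda>x. f (x, y)) = (\<integral>x. g (x, y) \<partial>lborel)" for y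
    by (simp add: integral_compact_eq_lborel[OF compact_slices(2)[OF S]] g_def indicator_def)
  have whole: "integral S f = integral\<^sup>L (lborel \<Otimes>\<^sub>M lborel) g"
    by (simp add: integral_compact_eq_lborel[OF assms] g_def lborel_prod)
  show "integral S f = integral UNIV (\<lambda>x. integral {y. (x, y) \<in> S} (\<lambda>y. f (x, y)))"
    unfolding inner1 whole
    by (simp add: integral_lborel lborel_pair.integrable_fst' int lborel_pair.integral_fst')
  show "integral S f = integral UNIV (\<lambda>y. integral {x. (x, y) \<in> S} (\<lambda>x. f (x, y)))"
    unfolding inner2 whole
    using lborel_pair.integral_snd[of "\<lambda>x y. g (x, y)"] int
    by (simp add: integral_lborel lborel_pair.integrable_snd)
  show "(\<lambda>x. integral {y. (x, y) \<in> S} (\<lambda>y. f (x, y))) integrable_on UNIV"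
    unfolding inner1 using lborel_pair.integrable_fst'[OF int] by (rule integrable_on_lborel)
qed

lemma integral_swap_compact:
  fixes f :: "real \<times> real \<Rightarrow> real"
  assumes S: "compact S" and f: "continuous_on S f"
  shows "integral (prod.swap ` S) (f \<circ> prod.swap) = integral S f"
proof -
  have "compact (prod.swap ` S)"
    using compact_continuous_image[OF continuous_on_swap S] .
  moreover have "continuous_on (prod.swap ` S) (f \<circ> prod.swap)"
    by (intro continuous_on_compose continuous_on_swap) (simp add: image_comp f)
  moreover have "{y. (x, y) \<in> prod.swap ` S} = {y. (y, x) \<in> S}" for x
    by (force simp: image_iff)
  ultimately show ?thesis
    using integral_iterated_compact(1)[of "prod.swap ` S" "f \<circ> prod.swap"]
      integral_iterated_compact(2)[OF S f]
    by simp
qed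

lemma integral_Un_Int:
  fixes f :: "'a::euclidean_space \<Rightarrow> real"
  assumes "f integrable_on S" "f integrable_on T" "f integrable_on (S \<inter> T)"
  shows "integral (S \<union> T) f + integral (S \<inter> T) f = integral S f + integral T f"
proof -
  define r where "r X x = (if x \<in> X then f x else 0)" for X x
  have int: "r S integrable_on UNIV" "r T integrable_on UNIV" "r (S \<inter> T) integrable_on UNIV"
    using assms unfolding r_def[abs_def] integrable_restrict_UNIV by auto
  have "r (S \<union> T) = (\<lambda>x. r S x + r T x - r (S \<inter> T) x)"
    by (auto simp: r_def fun_eq_iff)
  then have "integral UNIV (r (S \<union> T))
      = integral UNIV (r S) + integral UNIV (r T) - integral UNIV (r (S \<inter> T))"
    using int by (simp add: integral_diff integral_add integrable_add)
  then show ?thesis unfolding r_def[abs_def] integral_restrict_UNIV by simp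
qed

subsection \<open>Calculus in one variable\<close>

lemma integral_eq_antideriv:
  fixes F f :: "real \<Rightarrow> real"
  assumes "finite S" "a \<le> b" "continuous_on {a..b} F"
    and "\<And>x. x \<in> {a<..<b} - S \<Longrightarrow> (F has_real_derivative f x) (at x)"
  shows "integral {a..b} f = F b - F a"
  using fundamental_theorem_of_calculus_interior_strong[OF assms(1,2) _ assms(3)] assms(4)
  by (simp add: has_real_derivative_iff_has_vector_derivative integral_unique)

lemma oint_eq_antideriv:
  fixes F f :: "real \<Rightarrow> real"
  assumes "finite S" "continuous_on (closed_segment a b) F"
    and "\<And>x. x \<in> open_segment a b - S \<Longrightarrow> (F has_real_derivative f x) (at x)"
  shows "oint a b f = F b - F a"
proof (cases "a \<le> b")
  case True
  then show ?thesis
    using integral_eq_antideriv[OF assms(1) True, of F f] assms(2,3)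
    by (simp add: oint_def closed_segment_eq_real_ivl open_segment_eq_real_ivl)
next
  case False
  then show ?thesis
    using integral_eq_antideriv[OF assms(1), of b a F f] assms(2,3)
    by (simp add: oint_def closed_segment_eq_real_ivl open_segment_eq_real_ivl)
qed

lemma integral_split_oint:
  fixes f :: "real \<Rightarrow> real"
  assumes "f integrable_on {a..max b c}" "a \<le> b" "a \<le> c"
  shows "integral {a..b} f = integral {a..c} f + oint c b f"
proof (cases "c \<le> b")
  case True
  then show ?thesis
    using Henstock_Kurzweil_Integration.integral_combine[where a=a and c=c and b=b and f=f] assms
    by (simp add: oint_def max_def)
next
  case False
  then show ?thesis
    using Henstock_Kurzweil_Integration.integral_combine[where a=a and c=b and b=c and f=f] assms
    by (simp add: oint_def max_def)
qed

lemma DERIV_abs_compose [derivative_intros]: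
  fixes f :: "real \<Rightarrow> real"
  assumes f: "(f has_real_derivative D) (at x within S)" and nz: "f x \<noteq> 0"
  shows "((\<lambda>x. \<bar>f x\<bar>) has_real_derivative sgn (f x) * D) (at x within S)"
proof -
  have "(abs has_real_derivative sgn (f x)) (at (f x))"
  proof (cases "f x > 0")
    case True
    have "((\<lambda>y. y) has_real_derivative sgn (f x)) (at (f x))" using True by (auto intro: DERIV_ident)
    then show ?thesis
      by (rule has_field_derivative_transform_within_open[where S="{0<..}"]) (use True in auto)
  next
    case False
    with nz have "f x < 0" by simp
    have "((\<lambda>y. - y) has_real_derivative sgn (f x)) (at (f x))"
      using \<open>f x < 0\<close> by (auto intro!: derivative_eq_intros)
    then show ?thesis
      by (rule has_field_derivative_transform_within_open[where S="{..<0}"]) (use \<open>f x < 0\<close> in auto)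
  qed
  from DERIV_chain2[OF this f] show ?thesis by (simp add: mult.commute)
qed

lemma DERIV_arsinh_compose [derivative_intros]:
  fixes f :: "real \<Rightarrow> real"
  assumes "(f has_real_derivative D) (at x within S)"
  shows "((\<lambda>x. arsinh (f x)) has_real_derivative D / sqrt ((f x)\<^sup>2 + 1)) (at x within S)"
  using DERIV_chain2[OF arsinh_real_has_field_derivative assms] by simp

lemma abs_arsinh_le: "\<bar>arsinh t\<bar> \<le> 2 * \<bar>t :: real\<bar>"
proof -
  have "sqrt (\<bar>t\<bar>\<^sup>2 + 1) \<le> \<bar>t\<bar> + 1"
    by (rule real_le_lsqrt) (auto simp: power2_eq_square algebra_simps)
  moreover have "arsinh \<bar>t\<bar> \<le> \<bar>t\<bar> + sqrt (\<bar>t\<bar>\<^sup>2 + 1) - 1"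
    unfolding arsinh_real_def by (rule ln_le_minus_one[OF arsinh_real_aux])
  moreover have "\<bar>arsinh t\<bar> = arsinh \<bar>t\<bar>"
    by (simp add: abs_if)
  ultimately show ?thesis by linarith
qed

definition semicirc :: "real \<Rightarrow> real" where
  "semicirc x = sqrt (1 - x\<^sup>2)"

lemma semicirc_le_1: "semicirc x \<le> 1"
  by (simp add: semicirc_def)

lemma semicirc_sq:
  assumes "\<bar>x\<bar> \<le> 1"
  shows "(semicirc x)\<^sup>2 = 1 - x\<^sup>2" and "x\<^sup>2 + (semicirc x)\<^sup>2 = 1"
  using assms by (simp_all add: semicirc_def abs_square_le_1)

lemma DERIV_semicirc_compose [derivative_intros]:
  assumes "(f has_real_derivative D) (at x within S)" "\<bar>f x\<bar> < 1"
  shows "((\<lambda>x. semicirc (f x)) has_real_derivative - f x * D / semicirc (f x)) (at x within S)"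
proof -
  have "(f x)\<^sup>2 < 1" using assms(2) by (simp add: abs_square_less_1)
  then show ?thesis unfolding semicirc_def using assms(1)
    by (auto intro!: derivative_eq_intros simp: field_simps)
qed

lemma unit_disk_iff: "x\<^sup>2 + y\<^sup>2 \<le> 1 \<longleftrightarrow> \<bar>x\<bar> \<le> 1 \<and> - semicirc x \<le> y \<and> y \<le> semicirc x"
proof -
  have "x\<^sup>2 + y\<^sup>2 \<le> 1 \<longleftrightarrow> sqrt (y\<^sup>2) \<le> sqrt (1 - x\<^sup>2)"
    by (simp only: real_sqrt_le_iff) linarith
  also have "\<dots> \<longleftrightarrow> \<bar>y\<bar> \<le> semicirc x" by (simp add: semicirc_def)
  also have "\<dots> \<longleftrightarrow> \<bar>x\<bar> \<le> 1 \<and> \<bar>y\<bar> \<le> semicirc x"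
  proof -
    have "\<bar>x\<bar> \<le> 1" if "\<bar>y\<bar> \<le> semicirc x"
    proof -
      have "0 \<le> semicirc x" using that by (meson abs_ge_zero order_trans)
      then show ?thesis by (simp add: semicirc_def abs_square_le_1[symmetric])
    qed
    then show ?thesis by blast
  qed
  finally show ?thesis by auto
qed

lemma unit_disk_le_1:
  assumes "x\<^sup>2 + y\<^sup>2 \<le> (1::real)"
  shows "x \<le> 1" and "y \<le> 1"
  using assms semicirc_le_1[of x] by (auto simp: unit_disk_iff abs_le_iff)

subsection \<open>Closed forms\<close>

lemma wt_sym: "wt i x y = wt i y x"
  by (simp add: wt_def add.commute)

lemma continuous_on_wt: "continuous_on S (\<lambda>(x, y). wt i x y)"
  unfolding wt_def case_prod_unfold by (cases "i = 0") (auto intro!: continuous_intros)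

definition wt_antideriv :: "nat \<Rightarrow> real \<Rightarrow> real \<Rightarrow> real" where
  "wt_antideriv i x y =
    (if i = 0 then y else (y * sqrt (x\<^sup>2 + y\<^sup>2) + x\<^sup>2 * arsinh (y / \<bar>x\<bar>)) / 2)"

lemma wt_antideriv_deriv:
  assumes "x \<noteq> 0"
  shows "(wt_antideriv i x has_real_derivative wt i x y) (at y)"
proof (cases "i = 0")
  case False
  have "0 < x\<^sup>2 + y\<^sup>2" using assms by (simp add: add_pos_nonneg)
  then show ?thesis
    unfolding wt_antideriv_def wt_def using False assms
    by (auto intro!: derivative_eq_intros simp: real_sqrt_divide field_simps power2_eq_square)
qed (auto simp: wt_antideriv_def[abs_def] wt_def intro!: derivative_eq_intros)

lemma wt_antideriv_minus: "wt_antideriv i x (- y) = - wt_antideriv i x y"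
  by (simp add: wt_antideriv_def minus_divide_left[symmetric] algebra_simps)

lemma wt_antideriv_zero: "wt_antideriv i x 0 = 0"
  by (simp add: wt_antideriv_def)

lemma continuous_on_wt_antideriv: "x \<noteq> 0 \<Longrightarrow> continuous_on S (wt_antideriv i x)"
  using wt_antideriv_deriv by (blast intro: continuous_at_imp_continuous_on DERIV_isCont)

definition A_closed :: "nat \<Rightarrow> real \<Rightarrow> real \<Rightarrow> real" where
  "A_closed i a b =
    (if i = 0 then a * b / 2 else (a * b * sqrt (a\<^sup>2 + b\<^sup>2) + a ^ 3 * arsinh (b / \<bar>a\<bar>)) / 6)"

lemma A_closed_zero: "A_closed i 0 b = 0" "A_closed i a 0 = 0"
  by (simp_all add: A_closed_def)

lemma isCont_cube_mult_arsinh: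
  "isCont (\<lambda>z. fst z ^ 3 * arsinh (snd z / \<bar>fst z\<bar>)) (z :: real \<times> real)"
proof (cases "fst z = 0")
  case True
  have bound: "\<bar>a ^ 3 * arsinh (b / \<bar>a\<bar>)\<bar> \<le> 2 * a\<^sup>2 * \<bar>b\<bar>" for a b :: real
  proof -
    have "\<bar>a ^ 3 * arsinh (b / \<bar>a\<bar>)\<bar> \<le> \<bar>a\<bar> ^ 3 * (2 * \<bar>b / \<bar>a\<bar>\<bar>)"
      unfolding abs_mult power_abs by (intro mult_left_mono abs_arsinh_le) auto
    also have "\<dots> = 2 * a\<^sup>2 * \<bar>b\<bar>"
      by (cases "a = 0") (auto simp: power2_eq_square power3_eq_cube)
    finally show ?thesis .
  qed
  have "((\<lambda>z. fst z ^ 3 * arsinh (snd z / \<bar>fst z\<bar>)) \<longlongrightarrow> 0) (at z)"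
  proof (rule Lim_null_comparison)
    show "\<forall>\<^sub>F z in at z. norm (fst z ^ 3 * arsinh (snd z / \<bar>fst z\<bar>)) \<le> 2 * (fst z)\<^sup>2 * \<bar>snd z\<bar>"
      using bound by simp
    have "((\<lambda>z. 2 * (fst z)\<^sup>2 * \<bar>snd z\<bar>) \<longlongrightarrow> 2 * (fst z)\<^sup>2 * \<bar>snd z\<bar>) (at z)"
      by (intro tendsto_intros)
    then show "((\<lambda>z. 2 * (fst z)\<^sup>2 * \<bar>snd z\<bar>) \<longlongrightarrow> 0) (at z)" using True by simp
  qed
  then show ?thesis using True by (simp add: isCont_def)
qed (auto intro!: continuous_intros)

lemma continuous_on_A_closed [continuous_intros]:
  fixes f g :: "'a::topological_space \<Rightarrow> real"
  assumes "continuous_on S f" "continuous_on S g"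
  shows "continuous_on S (\<lambda>x. A_closed i (f x) (g x))"
proof -
  have "isCont (\<lambda>z. fst z * snd z * sqrt ((fst z)\<^sup>2 + (snd z)\<^sup>2)
      + fst z ^ 3 * arsinh (snd z / \<bar>fst z\<bar>)) z" for z :: "real \<times> real"
    by (rule continuous_add[OF _ isCont_cube_mult_arsinh]) (intro continuous_intros)
  then have "continuous_on UNIV (\<lambda>z. A_closed i (fst z) (snd z))"
    unfolding A_closed_def
    by (intro continuous_at_imp_continuous_on ballI) (cases "i = 0"; auto intro!: continuous_intros)
  from continuous_on_compose2[OF this continuous_on_Pair[OF assms]] show ?thesis by simp
qed

lemma A_closed_deriv_snd:
  assumes "i \<in> {0, 1}"
  shows "((\<lambda>b. A_closed i a b) has_real_derivative a * wt i a b / (2 + real i)) (at b)"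
proof -
  consider "i = 0" | "i = 1" "a = 0" | "i = 1" "a \<noteq> 0" using assms by auto
  then show ?thesis
  proof cases
    case 3
    have "0 < a\<^sup>2 + b\<^sup>2" using 3 by (simp add: add_pos_nonneg)
    then show ?thesis unfolding A_closed_def wt_def using 3
      by (auto intro!: derivative_eq_intros
          simp: real_sqrt_divide field_simps power2_eq_square power3_eq_cube)
  qed (auto simp: A_closed_def wt_def intro!: derivative_eq_intros)
qed

lemma A_closed_deriv_fst:
  assumes "i \<in> {0, 1}" "a \<noteq> 0"
  shows "((\<lambda>a. A_closed i a b) has_real_derivative wt_antideriv i a b - b * wt i a b / (2 + real i))
    (at a)"
proof (cases "i = 0")
  case False
  with assms have "i = 1" by auto
  have "0 < a\<^sup>2 + b\<^sup>2" using assms by (simp add: add_pos_nonneg)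
  then show ?thesis unfolding A_closed_def wt_def wt_antideriv_def using \<open>i = 1\<close> assms
    by (auto intro!: derivative_eq_intros
        simp: real_sqrt_divide real_sgn_eq field_simps power2_eq_square power3_eq_cube)
qed (auto simp: A_closed_def wt_def wt_antideriv_def intro!: derivative_eq_intros)

text \<open>\<open>A_closed i c y + A_closed i y c\<close> is the weighted area of the rectangle \<open>[0, c] \<times> [0, y]\<close>
  (two triangles, one of them reflected in the diagonal), so its derivative in \<open>y\<close> is the
  integral of the weight along the edge at height \<open>y\<close>.\<close>

lemma A_closed_swap_sum_deriv:
  assumes "i \<in> {0, 1}" "y \<noteq> 0"
  shows "((\<lambda>y. A_closed i c y + A_closed i y c) has_real_derivative wt_antideriv i y c) (at y)"
  using DERIV_add[OF A_closed_deriv_snd[OF assms(1), of c y] A_closed_deriv_fst[OF assms, of c]]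
  by (simp add: wt_sym)

lemma A_closed_ray_deriv:
  assumes "x \<noteq> 0"
  shows "((\<lambda>x. A_closed i x (t * x)) has_real_derivative wt_antideriv i x (t * x)) (at x)"
proof (cases "i = 0")
  case False
  have "0 < x\<^sup>2 + (t * x)\<^sup>2" using assms by (simp add: add_pos_nonneg)
  then show ?thesis unfolding A_closed_def wt_antideriv_def using False assms
    by (auto intro!: derivative_eq_intros simp: real_sgn_eq field_simps) (simp add: power2_eq_square)
qed (auto simp: A_closed_def wt_antideriv_def intro!: derivative_eq_intros)

lemma A_eq_A_closed: "A i a b = A_closed i a b"
proof (cases "a = 0")
  case False
  have inner: "oint 0 (b * x / a) (wt i x) = wt_antideriv i x (b * x / a)" for x
  proof (cases "x = 0")
    case False
    then show ?thesis
      using oint_eq_antideriv[of "{}" 0 "b * x / a" "wt_antideriv i x" "wt i x"]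
        wt_antideriv_deriv continuous_on_wt_antideriv
      by (simp add: wt_antideriv_zero)
  qed (simp add: oint_def wt_antideriv_zero)
  have ray: "((\<lambda>x. A_closed i x (b * x / a)) has_real_derivative wt_antideriv i x (b * x / a)) (at x)"
    if "x \<noteq> 0" for x
    using A_closed_ray_deriv[OF that, of i "b / a"] by simp
  have "oint 0 a (\<lambda>x. wt_antideriv i x (b * x / a)) = A_closed i a (b * a / a) - A_closed i 0 (b * 0 / a)"
    using ray \<open>a \<noteq> 0\<close> by (intro oint_eq_antideriv[of "{0}"]) (auto intro!: continuous_intros)
  then show ?thesis using False by (simp add: A_def inner A_closed_zero)
qed (simp add: A_def A_closed_def)

text \<open>\<open>(3 - i) / 6 * \<theta>\<close> is the weighted area of a circular sector of angle \<open>\<theta>\<close>, and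
  \<open>A_closed i x (semicirc x)\<close> that of the triangle \<open>(0, 0), (x, 0), (x, semicirc x)\<close>.\<close>

definition half_disk_antideriv :: "nat \<Rightarrow> real \<Rightarrow> real" where
  "half_disk_antideriv i x = (3 - real i) / 6 * arcsin x + A_closed i x (semicirc x)"

lemma half_disk_antideriv_deriv:
  assumes "i \<in> {0, 1}" "\<bar>x\<bar> < 1" "x \<noteq> 0"
  shows "(half_disk_antideriv i has_real_derivative wt_antideriv i x (semicirc x)) (at x)"
proof -
  define s where "s = semicirc x"
  have s: "0 < s" and x: "-1 < x" "x < 1"
    using assms by (auto simp: s_def semicirc_def abs_square_less_1)
  have circle: "x * x + s * s = 1"
    using semicirc_sq(2)[of x] assms by (simp add: s_def power2_eq_square)
  then have r: "sqrt (x\<^sup>2 + s\<^sup>2) = 1" by (simp add: power2_eq_square)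
  have ax: "\<bar>x\<bar> * \<bar>x\<bar> = x * x" by (simp add: abs_mult_self_eq)
  consider "i = 0" | "i = 1" using assms by auto
  then show ?thesis
  proof cases
    case 1
    show ?thesis unfolding 1 half_disk_antideriv_def[abs_def] A_closed_def wt_antideriv_def
      using x s assms(3)
      by (auto intro!: derivative_eq_intros simp: semicirc_def[symmetric] s_def[symmetric] field_simps)
        (use circle in algebra)
  next
    case 2
    show ?thesis unfolding 2 half_disk_antideriv_def[abs_def] A_closed_def wt_antideriv_def
      using x s assms(3) r
      by (auto intro!: derivative_eq_intros simp: semicirc_def[symmetric] s_def[symmetric]
          real_sgn_eq real_sqrt_divide field_simps)
        (use circle ax in algebra)
  qed
qed

lemma continuous_on_half_disk_antideriv: "continuous_on {-1..1} (half_disk_antideriv i)"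
  unfolding half_disk_antideriv_def semicirc_def by (intro continuous_intros) auto

lemma half_disk_antideriv_values:
  shows "half_disk_antideriv i 1 = (3 - real i) / 6 * (pi / 2)"
    and "half_disk_antideriv i (-1) = - ((3 - real i) / 6 * (pi / 2))"
    and "half_disk_antideriv i 0 = 0"
  by (simp_all add: half_disk_antideriv_def A_closed_def semicirc_def)

subsection \<open>Computing \<open>C\<close>\<close>

lemma compact_S2: "compact (S2 h1 h2)"
proof -
  have "S2 h1 h2 = {z. fst z \<le> h1 \<and> snd z \<le> h2 \<and> (fst z)\<^sup>2 + (snd z)\<^sup>2 \<le> 1}"
    by (auto simp: S2_def)
  then have "closed (S2 h1 h2)"
    by (simp add: closed_Collect_conj closed_Collect_le continuous_on_fst continuous_on_snd
        continuous_intros)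
  moreover have "S2 h1 h2 \<subseteq> cball 0 1"
    by (auto simp: S2_def norm_Pair)
  ultimately show ?thesis
    by (meson bounded_cball bounded_subset compact_eq_bounded_closed)
qed

lemma C_swap: "C i h1 h2 = C i h2 h1"
proof -
  have S: "S2 h2 h1 = prod.swap ` S2 h1 h2" by (auto simp: S2_def image_iff add.commute)
  have f: "(\<lambda>(x, y). wt i x y) \<circ> prod.swap = (\<lambda>(x, y). wt i x y)" by (auto simp: wt_sym)
  have "C i h2 h1 = integral (prod.swap ` S2 h1 h2) ((\<lambda>(x, y). wt i x y) \<circ> prod.swap)"
    by (simp only: C_def S f)
  also have "\<dots> = C i h1 h2"
    unfolding C_def by (rule integral_swap_compact[OF compact_S2 continuous_on_wt])
  finally show ?thesis ..
qed

lemma B_eq_C: "B i h = C i h 1"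
proof -
  have "S1 h = S2 h 1" unfolding S1_def S2_def using unit_disk_le_1(2) by blast
  then show ?thesis by (simp add: B_def C_def)
qed

definition chord_integral :: "nat \<Rightarrow> real \<Rightarrow> real \<Rightarrow> real" where
  "chord_integral i b x = integral {- semicirc x..min b (semicirc x)} (wt i x)"

lemma C_eq_chord_integral:
  shows "C i h1 h2 = integral {-1..min h1 1} (chord_integral i h2)"
    and "chord_integral i h2 integrable_on {-1..min h1 1}"
proof -
  have "{y. (x, y) \<in> S2 h1 h2}
      = (if x \<in> {-1..min h1 1} then {- semicirc x..min h2 (semicirc x)} else {})" for x
    by (auto simp: S2_def unit_disk_iff abs_le_iff)
  then have slice: "integral {y. (x, y) \<in> S2 h1 h2} (wt i x)
      = (if x \<in> {-1..min h1 1} then chord_integral i h2 x else 0)" for x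
    by (simp add: chord_integral_def)
  have "C i h1 h2 = integral UNIV (\<lambda>x. integral {y. (x, y) \<in> S2 h1 h2} (wt i x))"
    using integral_iterated_compact(1)[OF compact_S2 continuous_on_wt] by (simp add: C_def)
  also have "\<dots> = integral {-1..min h1 1} (chord_integral i h2)"
    by (simp only: slice integral_restrict_UNIV)
  finally show "C i h1 h2 = integral {-1..min h1 1} (chord_integral i h2)" .
  have "(\<lambda>x. integral {y. (x, y) \<in> S2 h1 h2} (wt i x)) integrable_on UNIV"
    using integral_iterated_compact(3)[OF compact_S2 continuous_on_wt] by simp
  then show "chord_integral i h2 integrable_on {-1..min h1 1}"
    by (simp only: slice integrable_restrict_UNIV)
qed

lemma chord_integral_eq:
  assumes "\<bar>x\<bar> \<le> 1" "x \<noteq> 0" "- semicirc x \<le> b"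
  shows "chord_integral i b x = wt_antideriv i x (min b (semicirc x)) + wt_antideriv i x (semicirc x)"
proof -
  have "0 \<le> semicirc x" using assms(1) by (simp add: semicirc_def abs_square_le_1)
  then have "chord_integral i b x
      = wt_antideriv i x (min b (semicirc x)) - wt_antideriv i x (- semicirc x)"
    unfolding chord_integral_def using assms(2,3) wt_antideriv_deriv
    by (intro integral_eq_antideriv[of "{}"]) (auto intro: continuous_on_wt_antideriv)
  then show ?thesis by (simp add: wt_antideriv_minus)
qed

lemma C_eq_0:
  assumes "1 < h1\<^sup>2 + h2\<^sup>2" "h1 \<le> 0" "h2 \<le> 0"
  shows "C i h1 h2 = 0"
proof -
  have "(x, y) \<notin> S2 h1 h2" for x y
    using power_mono[of "-h1" "-x" 2] power_mono[of "-h2" "-y" 2] assms by (auto simp: S2_def)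
  then have "S2 h1 h2 = {}" by auto
  then show ?thesis by (simp add: C_def)
qed

lemma C_eq_B:
  assumes "1 < h1\<^sup>2 + h2\<^sup>2" "0 < h1" "h2 \<le> 0"
  shows "C i h1 h2 = B i h2"
proof -
  have inactive: "x \<le> h1" if "x\<^sup>2 + y\<^sup>2 \<le> 1" "y \<le> h2" for x y
  proof (rule ccontr)
    assume "\<not> x \<le> h1"
    then have "h1\<^sup>2 < x\<^sup>2" using assms(2) by (intro power_strict_mono) auto
    moreover have "h2\<^sup>2 \<le> y\<^sup>2" using power_mono[of "-h2" "-y" 2] that(2) assms(3) by simp
    ultimately show False using that(1) assms(1) by linarith
  qed
  have "(x, y) \<in> S2 h1 h2 \<longleftrightarrow> (x, y) \<in> S2 1 h2" for x y
    using inactive[of x y] unit_disk_le_1[of x y] by (auto simp: S2_def)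
  then have "S2 h1 h2 = S2 1 h2" by (simp add: set_eq_iff split_paired_All)
  then have "C i h1 h2 = C i 1 h2" by (simp add: C_def)
  also have "\<dots> = B i h2" by (simp add: C_swap[of i 1 h2] B_eq_C)
  finally show ?thesis .
qed

lemma C_inclusion_exclusion:
  assumes "1 < h1\<^sup>2 + h2\<^sup>2" "0 < h1" "0 < h2"
  shows "C i h1 h2 = B i h1 + B i h2 - C i 1 1"
proof -
  have cover: "x \<le> h1 \<or> y \<le> h2" if "x\<^sup>2 + y\<^sup>2 \<le> 1" for x y
  proof (rule ccontr)
    assume "\<not> (x \<le> h1 \<or> y \<le> h2)"
    then have "h1\<^sup>2 < x\<^sup>2" "h2\<^sup>2 < y\<^sup>2" using assms(2,3) by (auto intro!: power_strict_mono)
    then show False using that assms(1) by linarith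
  qed
  have "(x, y) \<in> S2 h1 1 \<union> S2 1 h2 \<longleftrightarrow> (x, y) \<in> S2 1 1"
    and "(x, y) \<in> S2 h1 1 \<inter> S2 1 h2 \<longleftrightarrow> (x, y) \<in> S2 h1 h2" for x y
    using cover[of x y] unit_disk_le_1[of x y] by (auto simp: S2_def)
  then have "S2 h1 1 \<union> S2 1 h2 = S2 1 1" "S2 h1 1 \<inter> S2 1 h2 = S2 h1 h2"
    by (simp_all add: set_eq_iff split_paired_All del: Un_iff Int_iff)
  moreover have "(\<lambda>(x, y). wt i x y) integrable_on S2 a b" for a b
    by (rule integrable_on_compact[OF compact_S2 continuous_on_wt])
  ultimately have "C i 1 1 + C i h1 h2 = C i h1 1 + C i 1 h2"
    unfolding C_def by (metis integral_Un_Int)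
  then show ?thesis by (simp add: B_eq_C C_swap[of i 1 h2])
qed

lemma C_lower_half:
  assumes "i \<in> {0, 1}" "\<bar>h\<bar> \<le> 1"
  shows "C i h 0 = half_disk_antideriv i h - half_disk_antideriv i (-1)"
proof -
  have "C i h 0 = integral {-1..h} (chord_integral i 0)"
    using assms(2) by (simp add: C_eq_chord_integral(1))
  also have "\<dots> = half_disk_antideriv i h - half_disk_antideriv i (-1)"
  proof (rule integral_eq_antideriv[of "{0}"])
    show "continuous_on {-1..h} (half_disk_antideriv i)"
      by (rule continuous_on_subset[OF continuous_on_half_disk_antideriv]) (use assms(2) in auto)
    fix x :: real assume x: "x \<in> {-1<..<h} - {0}"
    then have "\<bar>x\<bar> < 1" using assms(2) by auto
    moreover have "0 \<le> semicirc x" using \<open>\<bar>x\<bar> < 1\<close> by (simp add: semicirc_def abs_square_le_1)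
    ultimately show "(half_disk_antideriv i has_real_derivative chord_integral i 0 x) (at x)"
      using half_disk_antideriv_deriv[OF assms(1)] chord_integral_eq[of x 0 i] x
      by (simp add: wt_antideriv_zero)
  qed (use assms in auto)
  finally show ?thesis .
qed

lemma C_unit_disk:
  assumes "i \<in> {0, 1}"
  shows "C i 1 1 = (3 - real i) / 3 * pi"
proof -
  have "C i 1 1 = integral {-1..1} (chord_integral i 1)"
    by (simp add: C_eq_chord_integral(1))
  also have "\<dots> = 2 * half_disk_antideriv i 1 - 2 * half_disk_antideriv i (-1)"
  proof (rule integral_eq_antideriv[of "{0}"])
    show "continuous_on {-1..1} (\<lambda>x. 2 * half_disk_antideriv i x)"
      by (intro continuous_intros continuous_on_half_disk_antideriv)
    fix x :: real assume x: "x \<in> {-1<..<1} - {0}"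
    then have "\<bar>x\<bar> < 1" by auto
    moreover have "0 \<le> semicirc x" "semicirc x \<le> 1"
      using \<open>\<bar>x\<bar> < 1\<close> by (simp_all add: semicirc_def abs_square_le_1)
    ultimately show "((\<lambda>x. 2 * half_disk_antideriv i x) has_real_derivative chord_integral i 1 x) (at x)"
      using DERIV_cmult[OF half_disk_antideriv_deriv[OF assms], of x 2] chord_integral_eq[of x 1 i] x
      by (simp add: min_def)
  qed auto
  finally show ?thesis by (simp add: half_disk_antideriv_values)
qed

lemma oint_chord_integral_strip:
  assumes i: "i \<in> {0, 1}" and h: "h1\<^sup>2 + h2\<^sup>2 \<le> 1"
  shows "oint 0 h2 (chord_integral i h1)
    = half_disk_antideriv i h2 + (A_closed i h1 h2 + A_closed i h2 h1)"
proof -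
  define Q where "Q = (\<lambda>y. half_disk_antideriv i y + (A_closed i h1 y + A_closed i y h1))"
  have b2: "\<bar>h2\<bar> \<le> 1" using h unit_disk_iff[of h2 h1] by (simp add: add.commute)
  have "oint 0 h2 (chord_integral i h1) = Q h2 - Q 0"
  proof (rule oint_eq_antideriv[of "{}"])
    have "continuous_on {-1..1} Q"
      unfolding Q_def by (intro continuous_intros continuous_on_half_disk_antideriv)
    then show "continuous_on (closed_segment 0 h2) Q"
      by (rule continuous_on_subset) (use b2 in \<open>auto simp: closed_segment_eq_real_ivl\<close>)
    fix y :: real assume "y \<in> open_segment 0 h2 - {}"
    then have y: "y \<noteq> 0" "\<bar>y\<bar> < \<bar>h2\<bar>" by (auto simp: open_segment_eq_real_ivl split: if_splits)
    then have "\<not> h2\<^sup>2 \<le> y\<^sup>2" using abs_le_square_iff[of h2 y] by auto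
    then have "h1\<^sup>2 < 1 - y\<^sup>2" using h by simp
    moreover have "\<bar>y\<bar> < 1" using y(2) b2 by simp
    ultimately have "h1\<^sup>2 < (semicirc y)\<^sup>2" "0 \<le> semicirc y"
      by (simp_all add: semicirc_sq(1) semicirc_def abs_square_le_1)
    then have "\<bar>h1\<bar> < semicirc y" using abs_le_square_iff[of "semicirc y" h1] by auto
    then have "chord_integral i h1 y = wt_antideriv i y (semicirc y) + wt_antideriv i y h1"
      using chord_integral_eq[of y h1 i] \<open>\<bar>y\<bar> < 1\<close> y(1) by simp
    then show "(Q has_real_derivative chord_integral i h1 y) (at y)"
      unfolding Q_def
      using half_disk_antideriv_deriv[OF i \<open>\<bar>y\<bar> < 1\<close> y(1)] A_closed_swap_sum_deriv[OF i y(1)]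
      by (auto intro: DERIV_add)
  qed simp
  then show ?thesis by (simp add: Q_def half_disk_antideriv_values A_closed_zero)
qed

lemma C_inside_disk:
  assumes i: "i \<in> {0, 1}" and h: "h1\<^sup>2 + h2\<^sup>2 \<le> 1"
  shows "C i h1 h2 = (3 - real i) / 6 * (pi / 2 + arcsin h1 + arcsin h2)
    + A i h1 (sqrt (1 - h1\<^sup>2)) + A i h2 (sqrt (1 - h2\<^sup>2)) + A i h1 h2 + A i h2 h1"
proof -
  have b1: "\<bar>h1\<bar> \<le> 1" and b2: "\<bar>h2\<bar> \<le> 1"
    using h unit_disk_iff[of h1 h2] unit_disk_iff[of h2 h1] by (simp_all add: add.commute)
  have "C i h1 h2 = integral {-1..h2} (chord_integral i h1)"
    using C_swap[of i h1 h2] C_eq_chord_integral(1)[of i h2 h1] b2 by simp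
  also have "\<dots> = integral {-1..0} (chord_integral i h1) + oint 0 h2 (chord_integral i h1)"
    using C_eq_chord_integral(2)[of i h1 "max h2 0"] b2 by (intro integral_split_oint) auto
  also have "integral {-1..0} (chord_integral i h1) = C i h1 0"
    using C_eq_chord_integral(1)[of i 0 h1] C_swap[of i 0 h1] by simp
  finally have "C i h1 h2 = half_disk_antideriv i h1 - half_disk_antideriv i (-1)
      + (half_disk_antideriv i h2 + (A_closed i h1 h2 + A_closed i h2 h1))"
    using C_lower_half[OF i b1] oint_chord_integral_strip[OF i h] by simp
  then show ?thesis
    by (simp add: half_disk_antideriv_def A_eq_A_closed A_closed_zero semicirc_def field_simps)
qed

theorem lemma28:
  fixes i :: nat and h1 h2 :: real
  assumes "i \<in> {0, 1}"
  shows "C i h1 h2 =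
    (if h1\<^sup>2 + h2\<^sup>2 > 1 \<and> h1 \<le> 0 \<and> h2 \<le> 0 then 0
     else if h1\<^sup>2 + h2\<^sup>2 > 1 \<and> h1 > 0 \<and> h2 \<le> 0 then B i h2
     else if h1\<^sup>2 + h2\<^sup>2 > 1 \<and> h1 \<le> 0 \<and> h2 > 0 then B i h1
     else if h1\<^sup>2 + h2\<^sup>2 > 1 \<and> h1 > 0 \<and> h2 > 0
       then B i h1 + B i h2 - (3 - real i) / 3 * pi
     else (3 - real i) / 6 * (pi / 2 + arcsin h1 + arcsin h2)
       + A i h1 (sqrt (1 - h1\<^sup>2)) + A i h2 (sqrt (1 - h2\<^sup>2))
       + A i h1 h2 + A i h2 h1)"
proof (cases "h1\<^sup>2 + h2\<^sup>2 \<le> 1")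
  case True
  then show ?thesis using C_inside_disk[OF assms True] by simp
next
  case False
  then have out: "1 < h1\<^sup>2 + h2\<^sup>2" "1 < h2\<^sup>2 + h1\<^sup>2" by simp_all
  consider "h1 \<le> 0" "h2 \<le> 0" | "0 < h1" "h2 \<le> 0" | "h1 \<le> 0" "0 < h2" | "0 < h1" "0 < h2"
    by linarith
  then show ?thesis
  proof cases
    case 1
    then show ?thesis using C_eq_0[OF out(1)] out by simp
  next
    case 2
    then show ?thesis using C_eq_B[OF out(1)] out by simp
  next
    case 3
    then show ?thesis using C_eq_B[OF out(2)] C_swap[of i h1 h2] out by simp
  next
    case 4
    then show ?thesis using C_inclusion_exclusion[OF out(1)] C_unit_disk[OF assms] out by simp
  qed
qed

end
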